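(* Let $\mu_1,\mu_2$ be compactly supported positive Borel measures on $\mathbb{C}$, with $\mu_2$ having infinite support, such that $\beta(\mu_1,\mu_2)<\infty$. Then $\operatorname{supp}(\mu_1)\subset \operatorname{Pc}(\operatorname{supp}(\mu_2))$.
   Context: For positive Borel measures $\mu_1,\mu_2$ on $\mathbb{C}$ with finite moments and $\mu_2$ infinitely supported, $\beta(\mu_1,\mu_2)=\sup\{\int|p|^2d\mu_1/\int|p|^2d\mu_2 : p\in\mathbb{P}[z]\setminus\{0\}\}\in(0,\infty]$ (equivalently, the limit of the largest generalized eigenvalues of the $(n+1)\times(n+1)$ truncations of $\mathbf{M}(\mu_1)$ with respect to those of $\mathbf{M}(\mu_2)$, where $\mathbf{M}(\mu)=(\int z^i\bar z^jd\mu)_{i,j\ge0}$). For a compact $K\subset\mathbb{C}$, its polynomially convex hull is $\operatorname{Pc}(K)=\{z\in\mathbb{C}: |p(z)|\le\max_{\xi\in K}|p(\xi)| \text{ for all } p\in\mathbb{P}[z]\}$. *)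

theory Defs
  imports "HOL-Analysis.Analysis" "HOL-Computational_Algebra.Polynomial"
begin

definition msupp :: "complex measure \<Rightarrow> complex set" where
  "msupp M = {z. \<forall>e>0. emeasure M (ball z e) > 0}"

definition beta :: "complex measure \<Rightarrow> complex measure \<Rightarrow> ennreal" where
  "beta M1 M2 = (SUP p\<in>{p::complex poly. p \<noteq> 0}.
      (\<integral>\<^sup>+ z. ennreal ((cmod (poly p z))\<^sup>2) \<partial>M1) /
      (\<integral>\<^sup>+ z. ennreal ((cmod (poly p z))\<^sup>2) \<partial>M2))"

definition Pc :: "complex set \<Rightarrow> complex set" where
  "Pc K = {z. \<forall>p::complex poly. cmod (poly p z) \<le> (SUP \<xi>\<in>K. cmod (poly p \<xi>))}"

end

theory Submission
  imports Defs
begin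

text \<open>
  Suppose \<open>z\<^sub>0 \<in> supp \<mu>\<^sub>1\<close> lies outside the polynomially convex hull of \<open>K = supp \<mu>\<^sub>2\<close>, so that
  some polynomial satisfies \<open>|p(z\<^sub>0)| > t > max\<^sub>K |p|\<close>; choose \<open>r\<close> with \<open>t < r < |p(z\<^sub>0)|\<close>.
  Then \<open>|p| > r\<close> on a ball around \<open>z\<^sub>0\<close>, which has positive \<open>\<mu>\<^sub>1\<close>-measure \<open>D\<close>, while
  \<open>|p| \<le> t\<close> holds \<open>\<mu>\<^sub>2\<close>-almost everywhere. Testing \<open>\<beta>\<close> on the powers \<open>p\<^sup>n\<close> gives
  \<open>D r\<^sup>2\<^sup>n \<le> \<beta> \<mu>\<^sub>2(\<complex>) t\<^sup>2\<^sup>n\<close> for all \<open>n\<close>, which is impossible for finite \<open>\<beta>\<close>.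
\<close>

lemma AE_in_msupp:
  fixes M :: "complex measure"
  assumes "sets M = sets borel"
  shows "AE z in M. z \<in> msupp M"
proof -
  define F where "F = {ball z e |z e. e > 0 \<and> emeasure M (ball z e) = 0}"
  obtain F' where F': "F' \<subseteq> F" "countable F'" "\<Union>F' = \<Union>F"
    using Lindelof[of F] unfolding F_def by blast
  have "(\<Union>S\<in>F'. S) \<in> null_sets M"
    using F' assms by (intro null_sets_UN') (auto simp: F_def null_sets_def)
  moreover have "{z \<in> space M. z \<notin> msupp M} \<subseteq> (\<Union>S\<in>F'. S)"
  proof
    fix z assume "z \<in> {z \<in> space M. z \<notin> msupp M}"
    then obtain e where "e > 0" "emeasure M (ball z e) = 0"
      unfolding msupp_def by (auto simp: not_less)
    then have "z \<in> \<Union>F" unfolding F_def by force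
    then show "z \<in> (\<Union>S\<in>F'. S)" using F' by simp
  qed
  ultimately show ?thesis by (rule AE_I')
qed

lemma nn_integral_le_on_msupp:
  fixes M :: "complex measure"
  assumes "sets M = sets borel" and "\<And>z. z \<in> msupp M \<Longrightarrow> f z \<le> c"
  shows "(\<integral>\<^sup>+ z. f z \<partial>M) \<le> c * emeasure M (space M)"
proof -
  have "(\<integral>\<^sup>+ z. f z \<partial>M) \<le> (\<integral>\<^sup>+ z. c \<partial>M)"
    using AE_in_msupp[OF assms(1)] by (intro nn_integral_mono_AE) (auto elim: AE_mp intro: assms(2))
  then show ?thesis by simp
qed

lemma emeasure_mult_le_nn_integral:
  assumes "A \<in> sets M" and "\<And>z. z \<in> A \<Longrightarrow> c \<le> f z"
  shows "c * emeasure M A \<le> (\<integral>\<^sup>+ z. f z \<partial>M)"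
proof -
  have "c * emeasure M A = (\<integral>\<^sup>+ z. c * indicator A z \<partial>M)"
    using assms(1) by (simp add: nn_integral_cmult_indicator)
  also have "\<dots> \<le> (\<integral>\<^sup>+ z. f z \<partial>M)"
    using assms(2) by (intro nn_integral_mono) (simp split: split_indicator)
  finally show ?thesis .
qed

lemma ennreal_le_mult_of_divide_le:
  fixes a b c :: ennreal
  assumes "a / c \<le> b" and "c \<noteq> \<infinity>" and "b \<noteq> \<infinity>"
  shows "a \<le> b * c"
proof (cases "c = 0")
  case True
  then show ?thesis
    using assms by (auto simp: ennreal_divide_zero top_unique split: if_splits)
next
  case False
  have "a = a / c * c"
    using False assms(2) by (simp add: ennreal_divide_times ennreal_times_divide mult_divide_eq_ennreal)
  also have "\<dots> \<le> b * c"
    using assms(1) by (intro mult_right_mono) auto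
  finally show ?thesis .
qed

lemma poly_sq_nn_integral_le_beta:
  fixes p :: "complex poly"
  assumes "p \<noteq> 0" and "beta M1 M2 \<noteq> \<infinity>"
    and "(\<integral>\<^sup>+ z. ennreal ((cmod (poly p z))\<^sup>2) \<partial>M2) \<noteq> \<infinity>"
  shows "(\<integral>\<^sup>+ z. ennreal ((cmod (poly p z))\<^sup>2) \<partial>M1)
           \<le> beta M1 M2 * (\<integral>\<^sup>+ z. ennreal ((cmod (poly p z))\<^sup>2) \<partial>M2)"
  using assms by (intro ennreal_le_mult_of_divide_le) (auto simp: beta_def intro: SUP_upper)

lemma cmod_poly_power_sq: "(cmod (poly (p ^ n) z))\<^sup>2 = ((cmod (poly p z))\<^sup>2) ^ n"
  by (simp add: poly_power norm_power flip: power_mult) (simp add: mult.commute)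

lemma ennreal_mult_power_less:
  fixes a b :: real and C D :: ennreal
  assumes "0 < b" and "b < a" and "D \<noteq> 0" and "C \<noteq> \<infinity>"
  shows "\<exists>n. C * ennreal (b ^ n) < D * ennreal (a ^ n)"
proof (cases "D = \<infinity>")
  case True
  then show ?thesis using assms(4) by (intro exI[of _ 0]) (simp add: top_unique less_top)
next
  case False
  then obtain C' D' where CD: "C = ennreal C'" "D = ennreal D'" "0 \<le> C'" "0 < D'"
    using assms(3,4) by (cases C; cases D) auto
  have "1 < a / b" using assms(1,2) by simp
  then obtain n where "C' / D' < (a / b) ^ n" using real_arch_pow by blast
  then have "C' * b ^ n < D' * a ^ n"
    using assms(1) CD(4) by (simp add: power_divide field_simps)
  then show ?thesis
    using CD assms(1,2) by (intro exI[of _ n]) (simp add: ennreal_mult[symmetric] ennreal_less_iff)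
qed

lemma beta_poly_power_bound:
  fixes M1 M2 :: "complex measure" and p :: "complex poly"
  assumes "sets M1 = sets borel" and "sets M2 = sets borel"
    and "emeasure M2 (space M2) < \<infinity>" and "beta M1 M2 < \<infinity>"
    and "p \<noteq> 0" and "A \<in> sets M1" and "0 \<le> r"
    and "\<And>z. z \<in> A \<Longrightarrow> r \<le> cmod (poly p z)"
    and "\<And>z. z \<in> msupp M2 \<Longrightarrow> cmod (poly p z) \<le> t"
  shows "emeasure M1 A * ennreal ((r\<^sup>2) ^ n)
           \<le> (beta M1 M2 * emeasure M2 (space M2)) * ennreal ((t\<^sup>2) ^ n)"
proof -
  let ?I = "\<lambda>M. \<integral>\<^sup>+ z. ennreal ((cmod (poly (p ^ n) z))\<^sup>2) \<partial>M"
  have upper: "?I M2 \<le> ennreal ((t\<^sup>2) ^ n) * emeasure M2 (space M2)"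
    unfolding cmod_poly_power_sq using assms(9)
    by (intro nn_integral_le_on_msupp assms(2) ennreal_leI power_mono) auto
  also have "\<dots> < \<infinity>"
    using assms(3) by (simp add: ennreal_mult_less_top)
  finally have "?I M2 \<noteq> \<infinity>" by simp
  have "emeasure M1 A * ennreal ((r\<^sup>2) ^ n) \<le> ?I M1"
    unfolding cmod_poly_power_sq mult.commute[of "emeasure M1 _"] using assms(6-8)
    by (intro emeasure_mult_le_nn_integral ennreal_leI power_mono) auto
  also have "\<dots> \<le> beta M1 M2 * ?I M2"
    using assms(4,5) \<open>?I M2 \<noteq> \<infinity>\<close> by (intro poly_sq_nn_integral_le_beta) auto
  also have "\<dots> \<le> beta M1 M2 * (ennreal ((t\<^sup>2) ^ n) * emeasure M2 (space M2))"
    using upper by (rule mult_left_mono) simp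
  finally show ?thesis by (simp add: ac_simps)
qed

lemma poly_bound_on_msupp_extends:
  fixes M1 M2 :: "complex measure" and p :: "complex poly"
  assumes "sets M1 = sets borel" and "sets M2 = sets borel"
    and "emeasure M2 (space M2) < \<infinity>" and "beta M1 M2 < \<infinity>"
    and "msupp M2 \<noteq> {}" and "z0 \<in> msupp M1"
    and bound: "\<And>z. z \<in> msupp M2 \<Longrightarrow> cmod (poly p z) \<le> s"
  shows "cmod (poly p z0) \<le> s"
proof (rule ccontr)
  assume "\<not> cmod (poly p z0) \<le> s"
  have "0 \<le> s"
    using assms(5) bound norm_ge_zero order_trans by blast
  obtain t where "s < t" "t < cmod (poly p z0)"
    using \<open>\<not> cmod (poly p z0) \<le> s\<close> dense not_le by blast
  obtain r where "t < r" "r < cmod (poly p z0)"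
    using \<open>t < cmod (poly p z0)\<close> dense by blast
  have "open {z. r < cmod (poly p z)}" by (intro open_Collect_less continuous_intros)
  then obtain e where "e > 0" and ball_e: "ball z0 e \<subseteq> {z. r < cmod (poly p z)}"
    using \<open>r < cmod (poly p z0)\<close> open_contains_ball by blast
  have "emeasure M1 (ball z0 e) \<noteq> 0"
    using assms(6) \<open>e > 0\<close> unfolding msupp_def by auto
  have "p \<noteq> 0"
    using \<open>t < r\<close> \<open>r < cmod (poly p z0)\<close> \<open>0 \<le> s\<close> \<open>s < t\<close> by auto
  have "0 < t\<^sup>2" "t\<^sup>2 < r\<^sup>2"
    using \<open>0 \<le> s\<close> \<open>s < t\<close> \<open>t < r\<close> by (auto intro: power_strict_mono)
  moreover have "beta M1 M2 * emeasure M2 (space M2) \<noteq> \<infinity>"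
    using assms(3,4) by (simp add: ennreal_mult_eq_top_iff less_top)
  ultimately obtain n where "(beta M1 M2 * emeasure M2 (space M2)) * ennreal ((t\<^sup>2) ^ n)
                               < emeasure M1 (ball z0 e) * ennreal ((r\<^sup>2) ^ n)"
    using ennreal_mult_power_less \<open>emeasure M1 (ball z0 e) \<noteq> 0\<close> by blast
  moreover have "emeasure M1 (ball z0 e) * ennreal ((r\<^sup>2) ^ n)
                   \<le> (beta M1 M2 * emeasure M2 (space M2)) * ennreal ((t\<^sup>2) ^ n)"
  proof (rule beta_poly_power_bound[OF assms(1-4) \<open>p \<noteq> 0\<close>])
    show "r \<le> cmod (poly p z)" if "z \<in> ball z0 e" for z
      using ball_e that by auto
    show "cmod (poly p z) \<le> t" if "z \<in> msupp M2" for z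
      using bound[OF that] \<open>s < t\<close> by simp
  qed (use assms(1) \<open>0 \<le> s\<close> \<open>s < t\<close> \<open>t < r\<close> in auto)
  ultimately show False by simp
qed

theorem theorem1:
  fixes M1 M2 :: "complex measure"
  assumes "sets M1 = sets borel" and "sets M2 = sets borel"
    and "emeasure M1 (space M1) < \<infinity>" and "emeasure M2 (space M2) < \<infinity>"
    and "compact (msupp M1)" and "compact (msupp M2)"
    and "infinite (msupp M2)"
    and "beta M1 M2 < \<infinity>"
  shows "msupp M1 \<subseteq> Pc (msupp M2)"
  unfolding Pc_def
proof (intro subsetI CollectI allI)
  fix z0 and p :: "complex poly"
  assume "z0 \<in> msupp M1"
  have bdd: "bdd_above ((\<lambda>\<xi>. cmod (poly p \<xi>)) ` msupp M2)"
    using assms(6) by (intro bounded_imp_bdd_above compact_imp_bounded compact_continuous_image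
        continuous_intros)
  show "cmod (poly p z0) \<le> (SUP \<xi>\<in>msupp M2. cmod (poly p \<xi>))"
  proof (rule poly_bound_on_msupp_extends[OF assms(1,2,4,8) _ \<open>z0 \<in> msupp M1\<close>])
    (* Infiniteness of supp \<mu>\<^sub>2 is only needed as non-emptiness here. *)
    show "msupp M2 \<noteq> {}"
      using assms(7) by auto
    show "cmod (poly p z) \<le> (SUP \<xi>\<in>msupp M2. cmod (poly p \<xi>))" if "z \<in> msupp M2" for z
      using that bdd by (rule cSUP_upper)
  qed
qed

end
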